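(* Let $(Q_t)_{t\ge0}$ be the semigroup of the Bessel-3 process, i.e. for $x>0$, $t>0$ and measurable $f$, $$Q_t f(x) = \int_0^\infty f(y)\,\frac{2}{\sqrt{2\pi t}}\,\frac{y}{x}\sinh\!\Big(\frac{xy}{t}\Big)e^{-\frac{x^2+y^2}{2t}}\,dy,$$ and for a probability measure $\mu$ on $(0,+\infty)$ write $\mu Q_t f := \int_{(0,\infty)} Q_t f(x)\,\mu(dx)$. Let $\gamma(dx) = x^2\,dx$ on $\mathbb{R}_+$ and $K_t := \frac{t\sqrt{2\pi t}}{2}$. Let $f$ be a measurable function such that $$C_f := \frac12\int_{\mathbb{R}_+}|f(x)|x^2\,dx<\infty \quad\text{and}\quad C'_f := \frac12\int_{\mathbb{R}_+}|f(x)|x^4\,dx<\infty.$$ Then for any $t>0$ and any probability measure $\mu$ supported on $(0,+\infty)$ with $\int_0^\infty x^2\mu(dx)<+\infty$, $$|\gamma(f) - K_t\,\mu Q_t f| \le \frac{C_f\int_0^\infty x^2\mu(dx) + C'_f}{t}.$$ If moreover $f$ is positive, then $$t\,\big(\gamma(f) - K_t\,\mu Q_t f\big) \xrightarrow[t\to\infty]{} \int_0^\infty\int_0^\infty f(y)\,\frac{y^2(x^2+y^2)}{2}\,dy\,\mu(dx).$$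
   Context: The Bessel-3 process is the diffusion $dY_t = dB_t + \frac{1}{Y_t}dt$; the displayed formula is the density of its transition kernel. *)

theory Defs
  imports "HOL-Probability.Probability"
begin

definition bessel3_density :: "real \<Rightarrow> real \<Rightarrow> real \<Rightarrow> real" where
  "bessel3_density t x y =
     2 / sqrt (2 * pi * t) * (y / x) * sinh (x * y / t) * exp (- (x\<^sup>2 + y\<^sup>2) / (2 * t))"

definition bessel3_Q :: "real \<Rightarrow> (real \<Rightarrow> real) \<Rightarrow> real \<Rightarrow> real" where
  "bessel3_Q t f x = (LBINT y:{0<..}. f y * bessel3_density t x y)"

definition mu_Q :: "real measure \<Rightarrow> real \<Rightarrow> (real \<Rightarrow> real) \<Rightarrow> real" where
  "mu_Q \<mu> t f = (\<integral>x. bessel3_Q t f x \<partial>\<mu>)"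

definition gamma_meas :: "(real \<Rightarrow> real) \<Rightarrow> real" where
  "gamma_meas f = (LBINT x:{0..}. f x * x\<^sup>2)"

definition K_const :: "real \<Rightarrow> real" where
  "K_const t = t * sqrt (2 * pi * t) / 2"

end

theory Submission
  imports Defs "HOL-Real_Asymp.Real_Asymp"
begin

text \<open>
  With \<open>h\<^sub>t(x,y) = t/(xy) sinh(xy/t) exp(-(x\<^sup>2+y\<^sup>2)/(2t))\<close> one has
  \<open>K\<^sub>t p\<^sub>t(x,y) = y\<^sup>2 h\<^sub>t(x,y)\<close>, hence
  \<open>\<gamma>(f) - K\<^sub>t Q\<^sub>t f(x) = \<integral> f(y) y\<^sup>2 (1 - h\<^sub>t(x,y)) dy\<close>.
  From \<open>z \<le> sinh z \<le> z e\<^sup>z\<close>, \<open>1 - b \<le> e\<^sup>-\<^sup>b\<close> and \<open>2xy \<le> x\<^sup>2+y\<^sup>2\<close> one gets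
  \<open>0 \<le> 1 - h\<^sub>t(x,y) \<le> (x\<^sup>2+y\<^sup>2)/(2t)\<close>; integrating in \<open>y\<close> and then against \<open>\<mu>\<close> gives the
  estimate. Since also \<open>t (1 - h\<^sub>t(x,y)) \<longrightarrow> (x\<^sup>2+y\<^sup>2)/2\<close>, the same bounds serve as dominating
  functions for dominated convergence, first in \<open>y\<close> and then in \<open>x\<close>.
\<close>

lemma borel_measurable_sinh [measurable]: "(sinh :: real \<Rightarrow> real) \<in> borel_measurable borel"
  by (intro borel_measurable_continuous_onI continuous_intros)

lemma sinh_ge_self: "0 \<le> (a::real) \<Longrightarrow> a \<le> sinh a"
  using real_le_x_sinh[of a] by (simp add: sinh_field_def exp_minus)

lemma sinh_le_mult_exp:
  assumes "0 \<le> (a::real)"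
  shows "sinh a \<le> a * exp a"
proof -
  have "1 - 2 * a \<le> exp (- 2 * a)"
    using exp_ge_add_one_self[of "- 2 * a"] by simp
  then have "exp a * (1 - 2 * a) \<le> exp a * exp (- 2 * a)"
    by (rule mult_left_mono) simp
  also have "exp a * exp (- 2 * a) = exp (- a)"
    by (simp flip: exp_add)
  finally show ?thesis
    by (simp add: sinh_field_def algebra_simps)
qed

lemma tendsto_mult_one_minus_sinhc_mult_exp:
  fixes b c :: real
  assumes "c > 0"
  shows "((\<lambda>t. t * (1 - t / c * sinh (c / t) * exp (- b / t))) \<longlongrightarrow> b) at_top"
  using assms unfolding sinh_field_def by real_asymp

definition bessel3_ratio :: "real \<Rightarrow> real \<Rightarrow> real \<Rightarrow> real" where
  "bessel3_ratio t x y = t / (x * y) * sinh (x * y / t) * exp (- (x\<^sup>2 + y\<^sup>2) / (2 * t))"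

lemma K_const_mult_bessel3_density:
  assumes "t > 0" "x > 0" "y > 0"
  shows "K_const t * bessel3_density t x y = y\<^sup>2 * bessel3_ratio t x y"
  using assms
  by (simp add: K_const_def bessel3_density_def bessel3_ratio_def field_simps power2_eq_square)

lemma bessel3_ratio_bounds:
  assumes "t > 0" "x > 0" "y > 0"
  shows "0 \<le> bessel3_ratio t x y" and "bessel3_ratio t x y \<le> 1"
    and "1 - bessel3_ratio t x y \<le> (x\<^sup>2 + y\<^sup>2) / (2 * t)"
proof -
  define a where "a = x * y / t"
  define b where "b = (x\<^sup>2 + y\<^sup>2) / (2 * t)"
  have "a > 0"
    using assms by (simp add: a_def)
  have "a \<le> b"
    using sum_squares_bound[of x y] assms unfolding a_def b_def by (simp add: field_simps)
  have ratio: "bessel3_ratio t x y = sinh a / a * exp (- b)"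
    using assms by (simp add: bessel3_ratio_def a_def b_def minus_divide_left)
  have "1 \<le> sinh a / a"
    using sinh_ge_self[of a] \<open>a > 0\<close> by simp
  then show "0 \<le> bessel3_ratio t x y"
    unfolding ratio by (intro mult_nonneg_nonneg) simp_all
  have "sinh a / a \<le> exp a"
    using sinh_le_mult_exp[of a] \<open>a > 0\<close> by (simp add: divide_simps mult.commute)
  then have "bessel3_ratio t x y \<le> exp a * exp (- b)"
    unfolding ratio by (rule mult_right_mono) simp_all
  also have "\<dots> \<le> 1"
    using \<open>a \<le> b\<close> by (simp flip: exp_add)
  finally show "bessel3_ratio t x y \<le> 1" .
  have "1 - b \<le> exp (- b)"
    using exp_ge_add_one_self[of "- b"] by simp
  also have "\<dots> \<le> bessel3_ratio t x y"
    unfolding ratio using mult_right_mono[OF \<open>1 \<le> sinh a / a\<close>, of "exp (- b)"] by simp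
  finally show "1 - bessel3_ratio t x y \<le> (x\<^sup>2 + y\<^sup>2) / (2 * t)"
    by (simp add: b_def)
qed

lemma tendsto_bessel3_ratio:
  assumes "x > 0" "y > 0"
  shows "((\<lambda>t. t * (1 - bessel3_ratio t x y)) \<longlongrightarrow> (x\<^sup>2 + y\<^sup>2) / 2) at_top"
proof -
  have exponent: "- (x\<^sup>2 + y\<^sup>2) / (2 * t) = - ((x\<^sup>2 + y\<^sup>2) / 2) / t" for t :: real
    by (simp only: minus_divide_left divide_divide_eq_left)
  show ?thesis
    unfolding bessel3_ratio_def exponent using assms by (intro tendsto_mult_one_minus_sinhc_mult_exp) simp
qed

lemma K_const_mult_bessel3_density_bounds:
  assumes "t > 0" "x > 0" "y \<ge> 0"
  shows "0 \<le> K_const t * bessel3_density t x y" and "K_const t * bessel3_density t x y \<le> y\<^sup>2"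
    and "y\<^sup>2 - K_const t * bessel3_density t x y \<le> y\<^sup>2 * (x\<^sup>2 + y\<^sup>2) / (2 * t)"
proof -
  consider "y = 0" | "y > 0"
    using assms(3) by linarith
  then have "0 \<le> K_const t * bessel3_density t x y \<and> K_const t * bessel3_density t x y \<le> y\<^sup>2
      \<and> y\<^sup>2 - K_const t * bessel3_density t x y \<le> y\<^sup>2 * (x\<^sup>2 + y\<^sup>2) / (2 * t)"
  proof cases
    case 1
    then show ?thesis
      by (simp add: bessel3_density_def)
  next
    case 2
    note ratio = bessel3_ratio_bounds[OF assms(1,2) 2]
    have "y\<^sup>2 * (1 - bessel3_ratio t x y) \<le> y\<^sup>2 * ((x\<^sup>2 + y\<^sup>2) / (2 * t))"
      using ratio(3) by (rule mult_left_mono) simp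
    then show ?thesis
      using ratio(1,2) mult_left_le[OF ratio(2), of "y\<^sup>2"]
      by (simp add: K_const_mult_bessel3_density[OF assms(1,2) 2] algebra_simps)
  qed
  then show "0 \<le> K_const t * bessel3_density t x y" "K_const t * bessel3_density t x y \<le> y\<^sup>2"
    "y\<^sup>2 - K_const t * bessel3_density t x y \<le> y\<^sup>2 * (x\<^sup>2 + y\<^sup>2) / (2 * t)"
    by auto
qed

lemma tendsto_K_const_mult_bessel3_density:
  assumes "x > 0" "y \<ge> 0"
  shows "((\<lambda>t. t * (y\<^sup>2 - K_const t * bessel3_density t x y)) \<longlongrightarrow> y\<^sup>2 * (x\<^sup>2 + y\<^sup>2) / 2) at_top"
proof (cases "y = 0")
  case True
  then show ?thesis
    by (simp add: bessel3_density_def)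
next
  case False
  with assms have "y > 0"
    by simp
  have "\<forall>\<^sub>F t in at_top. y\<^sup>2 * (t * (1 - bessel3_ratio t x y))
      = t * (y\<^sup>2 - K_const t * bessel3_density t x y)"
    using eventually_gt_at_top[of 0]
    by eventually_elim (simp add: K_const_mult_bessel3_density[OF _ assms(1) \<open>y > 0\<close>] algebra_simps)
  moreover have "((\<lambda>t. y\<^sup>2 * (t * (1 - bessel3_ratio t x y))) \<longlongrightarrow> y\<^sup>2 * ((x\<^sup>2 + y\<^sup>2) / 2)) at_top"
    using tendsto_bessel3_ratio[OF assms(1) \<open>y > 0\<close>] by (rule tendsto_mult_left)
  ultimately show ?thesis
    by (simp add: Lim_transform_eventually)
qed

lemma set_integrableI_bounded:
  fixes g :: "'a \<Rightarrow> real"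
  assumes "set_borel_measurable M A g" "(\<integral>\<^sup>+x\<in>A. ennreal (norm (g x)) \<partial>M) < \<infinity>"
  shows "set_integrable M A g"
  unfolding set_integrable_def
proof (rule integrableI_bounded)
  show "(\<lambda>x. indicator A x *\<^sub>R g x) \<in> borel_measurable M"
    using assms(1) by (simp add: set_borel_measurable_def)
  have "(\<integral>\<^sup>+x. ennreal (norm (indicator A x *\<^sub>R g x)) \<partial>M) = (\<integral>\<^sup>+x\<in>A. ennreal (norm (g x)) \<partial>M)"
    by (intro nn_integral_cong) (simp split: split_indicator)
  with assms(2) show "(\<integral>\<^sup>+x. ennreal (norm (indicator A x *\<^sub>R g x)) \<partial>M) < \<infinity>"
    by simp
qed

lemma abs_set_integral_le_set_integral:
  fixes g G :: "'a \<Rightarrow> real"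
  assumes "set_integrable M A G" "set_borel_measurable M A g" "\<And>x. x \<in> A \<Longrightarrow> \<bar>g x\<bar> \<le> G x"
  shows "\<bar>LINT x:A|M. g x\<bar> \<le> (LINT x:A|M. G x)"
proof -
  have g_int: "set_integrable M A g"
    using assms(1,2) by (rule set_integrable_bound) (auto intro!: AE_I2 order_trans[OF assms(3)])
  have "\<bar>LINT x:A|M. g x\<bar> \<le> (LINT x:A|M. \<bar>g x\<bar>)"
    using set_integral_norm_bound[OF g_int] by simp
  also have "\<dots> \<le> (LINT x:A|M. G x)"
    using set_integrable_abs[OF g_int] assms(1,3) by (rule set_integral_mono)
  finally show ?thesis .
qed

lemma set_integral_dominated_convergence_at_top:
  fixes s :: "real \<Rightarrow> 'a \<Rightarrow> real" and f w :: "'a \<Rightarrow> real"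
  assumes [measurable]: "A \<in> sets M" "f \<in> borel_measurable M" "\<And>t. s t \<in> borel_measurable M"
    and "set_integrable M A w"
    and "AE x in M. x \<in> A \<longrightarrow> ((\<lambda>t. s t x) \<longlongrightarrow> f x) at_top"
    and "\<forall>\<^sub>F t in at_top. AE x in M. x \<in> A \<longrightarrow> \<bar>s t x\<bar> \<le> w x"
  shows "((\<lambda>t. LINT x:A|M. s t x) \<longlongrightarrow> (LINT x:A|M. f x)) at_top"
  unfolding set_lebesgue_integral_def
proof (rule integral_dominated_convergence_at_top[where w="\<lambda>x. indicator A x *\<^sub>R w x"])
  show "integrable M (\<lambda>x. indicator A x *\<^sub>R w x)"
    using assms(4) by (simp add: set_integrable_def)
  show "AE x in M. ((\<lambda>t. indicator A x *\<^sub>R s t x) \<longlongrightarrow> indicator A x *\<^sub>R f x) at_top"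
    using assms(5) by eventually_elim (simp split: split_indicator)
  show "\<forall>\<^sub>F t in at_top. AE x in M. norm (indicator A x *\<^sub>R s t x) \<le> indicator A x *\<^sub>R w x"
    using assms(6) by eventually_elim (auto elim!: eventually_mono split: split_indicator)
qed measurable

lemma set_integral_abs_mult_moments:
  fixes f :: "real \<Rightarrow> real"
  assumes "set_integrable M A (\<lambda>y. \<bar>f y\<bar> * y\<^sup>2)" "set_integrable M A (\<lambda>y. \<bar>f y\<bar> * y ^ 4)"
  shows "set_integrable M A (\<lambda>y. \<bar>f y\<bar> * (y\<^sup>2 * (x\<^sup>2 + y\<^sup>2)))"
    and "(LINT y:A|M. \<bar>f y\<bar> * (y\<^sup>2 * (x\<^sup>2 + y\<^sup>2)))
      = x\<^sup>2 * (LINT y:A|M. \<bar>f y\<bar> * y\<^sup>2) + (LINT y:A|M. \<bar>f y\<bar> * y ^ 4)"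
proof -
  have split: "\<bar>f y\<bar> * (y\<^sup>2 * (x\<^sup>2 + y\<^sup>2)) = x\<^sup>2 * (\<bar>f y\<bar> * y\<^sup>2) + \<bar>f y\<bar> * y ^ 4" for y
    by (simp add: algebra_simps power2_eq_square power4_eq_xxxx)
  show "set_integrable M A (\<lambda>y. \<bar>f y\<bar> * (y\<^sup>2 * (x\<^sup>2 + y\<^sup>2)))"
    unfolding split using assms by (intro set_integral_add(1) set_integrable_mult_right)
  show "(LINT y:A|M. \<bar>f y\<bar> * (y\<^sup>2 * (x\<^sup>2 + y\<^sup>2)))
      = x\<^sup>2 * (LINT y:A|M. \<bar>f y\<bar> * y\<^sup>2) + (LINT y:A|M. \<bar>f y\<bar> * y ^ 4)"
    unfolding split using assms by (simp add: set_integral_add(2))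
qed

lemma borel_measurable_bessel3_density [measurable]:
  "(\<lambda>y. bessel3_density t x y) \<in> borel_measurable borel"
  unfolding bessel3_density_def by measurable

lemma borel_measurable_bessel3_Q:
  assumes [measurable]: "f \<in> borel_measurable borel"
  shows "bessel3_Q t f \<in> borel_measurable borel"
  unfolding bessel3_Q_def[abs_def] set_lebesgue_integral_def bessel3_density_def by measurable

lemma K_const_mult_bessel3_Q:
  "K_const t * bessel3_Q t f x = (LBINT y:{0..}. f y * (K_const t * bessel3_density t x y))"
proof -
  have "K_const t * bessel3_Q t f x = (LBINT y:{0<..}. f y * (K_const t * bessel3_density t x y))"
    unfolding bessel3_Q_def set_integral_mult_right[symmetric]
    by (rule set_lebesgue_integral_cong) auto
  also have "\<dots> = (LBINT y:{0..}. f y * (K_const t * bessel3_density t x y))"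
    by (rule set_integral_discrete_difference[where X="{0}"]) auto
  finally show ?thesis .
qed

lemma abs_K_const_mult_bessel3_Q_le:
  assumes [measurable]: "f \<in> borel_measurable borel"
    and "set_integrable lborel {0..} (\<lambda>y. \<bar>f y\<bar> * y\<^sup>2)" "t > 0" "x > 0"
  shows "\<bar>K_const t * bessel3_Q t f x\<bar> \<le> (LBINT y:{0..}. \<bar>f y\<bar> * y\<^sup>2)"
  unfolding K_const_mult_bessel3_Q
proof (rule abs_set_integral_le_set_integral[OF assms(2)])
  show "set_borel_measurable lborel {0..} (\<lambda>y. f y * (K_const t * bessel3_density t x y))"
    unfolding set_borel_measurable_def by measurable
  fix y :: real
  assume "y \<in> {0..}"
  with K_const_mult_bessel3_density_bounds[OF assms(3,4)]
  show "\<bar>f y * (K_const t * bessel3_density t x y)\<bar> \<le> \<bar>f y\<bar> * y\<^sup>2"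
    by (simp add: abs_mult[of "f y"] abs_of_nonneg mult_left_mono)
qed

lemma gamma_meas_minus_K_const_mult_bessel3_Q:
  assumes [measurable]: "f \<in> borel_measurable borel"
    and f_int: "set_integrable lborel {0..} (\<lambda>y. \<bar>f y\<bar> * y\<^sup>2)" and "t > 0" "x > 0"
  shows "gamma_meas f - K_const t * bessel3_Q t f x
    = (LBINT y:{0..}. f y * (y\<^sup>2 - K_const t * bessel3_density t x y))"
proof -
  have "set_integrable lborel {0..} (\<lambda>y. f y * y\<^sup>2)"
    using f_int by (rule set_integrable_bound) (auto simp: set_borel_measurable_def abs_mult)
  moreover have "set_integrable lborel {0..} (\<lambda>y. f y * (K_const t * bessel3_density t x y))"
    using f_int
  proof (rule set_integrable_bound)
    show "set_borel_measurable lborel {0..} (\<lambda>y. f y * (K_const t * bessel3_density t x y))"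
      unfolding set_borel_measurable_def by measurable
    show "AE y in lborel. y \<in> {0..} \<longrightarrow>
        norm (f y * (K_const t * bessel3_density t x y)) \<le> norm (\<bar>f y\<bar> * y\<^sup>2)"
      using K_const_mult_bessel3_density_bounds[OF assms(3,4)]
      by (intro AE_I2) (simp add: abs_mult[of "f _"] abs_of_nonneg mult_left_mono)
  qed
  ultimately show ?thesis
    unfolding gamma_meas_def K_const_mult_bessel3_Q
    by (simp flip: set_integral_diff(2) add: right_diff_distrib)
qed

lemma abs_gamma_meas_minus_K_const_mult_bessel3_Q_le:
  assumes [measurable]: "f \<in> borel_measurable borel"
    and f_int: "set_integrable lborel {0..} (\<lambda>y. \<bar>f y\<bar> * y\<^sup>2)"
      "set_integrable lborel {0..} (\<lambda>y. \<bar>f y\<bar> * y ^ 4)"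
    and "t > 0" "x > 0"
  shows "\<bar>gamma_meas f - K_const t * bessel3_Q t f x\<bar>
    \<le> (x\<^sup>2 * (LBINT y:{0..}. \<bar>f y\<bar> * y\<^sup>2) + (LBINT y:{0..}. \<bar>f y\<bar> * y ^ 4)) / (2 * t)"
proof -
  note moments = set_integral_abs_mult_moments[OF f_int, of x]
  have "\<bar>LBINT y:{0..}. f y * (y\<^sup>2 - K_const t * bessel3_density t x y)\<bar>
      \<le> (LBINT y:{0..}. \<bar>f y\<bar> * (y\<^sup>2 * (x\<^sup>2 + y\<^sup>2)) / (2 * t))"
  proof (rule abs_set_integral_le_set_integral)
    show "set_integrable lborel {0..} (\<lambda>y. \<bar>f y\<bar> * (y\<^sup>2 * (x\<^sup>2 + y\<^sup>2)) / (2 * t))"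
      using moments(1) by (rule set_integrable_divide)
    show "set_borel_measurable lborel {0..} (\<lambda>y. f y * (y\<^sup>2 - K_const t * bessel3_density t x y))"
      unfolding set_borel_measurable_def by measurable
    fix y :: real
    assume "y \<in> {0..}"
    with K_const_mult_bessel3_density_bounds[OF assms(4,5)]
    show "\<bar>f y * (y\<^sup>2 - K_const t * bessel3_density t x y)\<bar> \<le> \<bar>f y\<bar> * (y\<^sup>2 * (x\<^sup>2 + y\<^sup>2)) / (2 * t)"
      by (simp add: abs_mult mult_left_mono times_divide_eq_right[symmetric] del: times_divide_eq_right)
  qed
  then show ?thesis
    using moments(2) by (simp add: gamma_meas_minus_K_const_mult_bessel3_Q[OF assms(1,2,4,5)])
qed

lemma tendsto_gamma_meas_minus_K_const_mult_bessel3_Q: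
  assumes [measurable]: "f \<in> borel_measurable borel"
    and f_int: "set_integrable lborel {0..} (\<lambda>y. \<bar>f y\<bar> * y\<^sup>2)"
      "set_integrable lborel {0..} (\<lambda>y. \<bar>f y\<bar> * y ^ 4)"
    and "x > 0"
  shows "((\<lambda>t. t * (gamma_meas f - K_const t * bessel3_Q t f x))
    \<longlongrightarrow> (LBINT y:{0..}. f y * (y\<^sup>2 * (x\<^sup>2 + y\<^sup>2) / 2))) at_top"
proof -
  have "((\<lambda>t. LBINT y:{0..}. f y * (t * (y\<^sup>2 - K_const t * bessel3_density t x y)))
      \<longlongrightarrow> (LBINT y:{0..}. f y * (y\<^sup>2 * (x\<^sup>2 + y\<^sup>2) / 2))) at_top"
  proof (rule set_integral_dominated_convergence_at_top)
    show "set_integrable lborel {0..} (\<lambda>y. \<bar>f y\<bar> * (y\<^sup>2 * (x\<^sup>2 + y\<^sup>2)) / 2)"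
      using set_integral_abs_mult_moments(1)[OF f_int] by (rule set_integrable_divide)
    show "AE y in lborel. y \<in> {0..} \<longrightarrow> ((\<lambda>t. f y * (t * (y\<^sup>2 - K_const t * bessel3_density t x y)))
        \<longlongrightarrow> f y * (y\<^sup>2 * (x\<^sup>2 + y\<^sup>2) / 2)) at_top"
      using tendsto_K_const_mult_bessel3_density[OF assms(4)] by (intro AE_I2 impI tendsto_mult_left) simp
    show "\<forall>\<^sub>F t in at_top. AE y in lborel. y \<in> {0..} \<longrightarrow>
        \<bar>f y * (t * (y\<^sup>2 - K_const t * bessel3_density t x y))\<bar> \<le> \<bar>f y\<bar> * (y\<^sup>2 * (x\<^sup>2 + y\<^sup>2)) / 2"
      using eventually_gt_at_top[of 0]
    proof eventually_elim
      case (elim t)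
      note bounds = K_const_mult_bessel3_density_bounds[OF elim assms(4)]
      have "t * (y\<^sup>2 - K_const t * bessel3_density t x y) \<le> y\<^sup>2 * (x\<^sup>2 + y\<^sup>2) / 2" if "y \<ge> 0" for y
        using mult_left_mono[OF bounds(3)[OF that], of t] elim by simp
      with bounds(2) elim show ?case
        by (intro AE_I2) (simp add: abs_mult mult_left_mono times_divide_eq_right[symmetric] del: times_divide_eq_right)
    qed
  qed measurable
  moreover have "\<forall>\<^sub>F t in at_top. (LBINT y:{0..}. f y * (t * (y\<^sup>2 - K_const t * bessel3_density t x y)))
      = t * (gamma_meas f - K_const t * bessel3_Q t f x)"
    using eventually_gt_at_top[of 0]
    by eventually_elim
      (simp add: gamma_meas_minus_K_const_mult_bessel3_Q[OF assms(1,2) _ assms(4)] mult.left_commute)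
  ultimately show ?thesis
    by (rule Lim_transform_eventually)
qed

lemma gamma_meas_minus_K_const_mult_mu_Q:
  assumes "prob_space \<mu>" "sets \<mu> = sets borel" "AE x in \<mu>. 0 < x"
    and "f \<in> borel_measurable borel" "set_integrable lborel {0..} (\<lambda>y. \<bar>f y\<bar> * y\<^sup>2)" "t > 0"
  shows "gamma_meas f - K_const t * mu_Q \<mu> t f = (\<integral>x. gamma_meas f - K_const t * bessel3_Q t f x \<partial>\<mu>)"
proof -
  interpret prob_space \<mu>
    by fact
  have "integrable \<mu> (\<lambda>x. K_const t * bessel3_Q t f x)"
  proof (rule Bochner_Integration.integrable_bound[where f="\<lambda>_. LBINT y:{0..}. \<bar>f y\<bar> * y\<^sup>2"])
    note [measurable] = borel_measurable_bessel3_Q[OF assms(4)]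
    show "(\<lambda>x. K_const t * bessel3_Q t f x) \<in> borel_measurable \<mu>"
      unfolding measurable_cong_sets[OF assms(2) refl] by measurable
    show "AE x in \<mu>. norm (K_const t * bessel3_Q t f x) \<le> norm (LBINT y:{0..}. \<bar>f y\<bar> * y\<^sup>2)"
      using assms(3) by eventually_elim (use abs_K_const_mult_bessel3_Q_le[OF assms(4-6)] in force)
  qed simp
  moreover have "K_const t \<noteq> 0"
    using \<open>t > 0\<close> by (simp add: K_const_def)
  ultimately show ?thesis
    by (simp add: mu_Q_def prob_space)
qed

lemma abs_gamma_meas_minus_K_const_mult_mu_Q_le:
  assumes \<mu>: "prob_space \<mu>" "sets \<mu> = sets borel" "AE x in \<mu>. 0 < x" "integrable \<mu> (\<lambda>x. x\<^sup>2)"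
    and f: "f \<in> borel_measurable borel" "set_integrable lborel {0..} (\<lambda>y. \<bar>f y\<bar> * y\<^sup>2)"
      "set_integrable lborel {0..} (\<lambda>y. \<bar>f y\<bar> * y ^ 4)"
    and "t > 0"
  shows "\<bar>gamma_meas f - K_const t * mu_Q \<mu> t f\<bar>
    \<le> ((1/2) * (LBINT y:{0..}. \<bar>f y\<bar> * y\<^sup>2) * (\<integral>x. x\<^sup>2 \<partial>\<mu>)
       + (1/2) * (LBINT y:{0..}. \<bar>f y\<bar> * y ^ 4)) / t"
proof -
  interpret prob_space \<mu>
    by fact
  define A where "A = (LBINT y:{0..}. \<bar>f y\<bar> * y\<^sup>2)"
  define B where "B = (LBINT y:{0..}. \<bar>f y\<bar> * y ^ 4)"
  have "0 \<le> A" "0 \<le> B"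
    unfolding A_def B_def set_lebesgue_integral_def by (auto intro!: integral_nonneg_AE)
  have "\<bar>\<integral>x. gamma_meas f - K_const t * bessel3_Q t f x \<partial>\<mu>\<bar>
      \<le> (\<integral>x. \<bar>gamma_meas f - K_const t * bessel3_Q t f x\<bar> \<partial>\<mu>)"
    by (rule integral_abs_bound)
  also have "\<dots> \<le> (\<integral>x. (x\<^sup>2 * A + B) / (2 * t) \<partial>\<mu>)"
  proof (rule integral_mono_AE')
    show "integrable \<mu> (\<lambda>x. (x\<^sup>2 * A + B) / (2 * t))"
      using \<mu>(4) by simp
    show "AE x in \<mu>. \<bar>gamma_meas f - K_const t * bessel3_Q t f x\<bar> \<le> (x\<^sup>2 * A + B) / (2 * t)"
      using \<mu>(3) unfolding A_def B_def
      by eventually_elim (rule abs_gamma_meas_minus_K_const_mult_bessel3_Q_le[OF f \<open>t > 0\<close>])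
    show "AE x in \<mu>. 0 \<le> (x\<^sup>2 * A + B) / (2 * t)"
      using \<open>0 \<le> A\<close> \<open>0 \<le> B\<close> \<open>t > 0\<close> by simp
  qed
  also have "\<dots> = ((1/2) * A * (\<integral>x. x\<^sup>2 \<partial>\<mu>) + (1/2) * B) / t"
    using \<mu>(4) by (simp add: prob_space field_simps)
  finally show ?thesis
    unfolding A_def B_def gamma_meas_minus_K_const_mult_mu_Q[OF \<mu>(1-3) f(1,2) \<open>t > 0\<close>] .
qed

lemma tendsto_gamma_meas_minus_K_const_mult_mu_Q:
  assumes \<mu>: "prob_space \<mu>" "sets \<mu> = sets borel" "AE x in \<mu>. 0 < x" "integrable \<mu> (\<lambda>x. x\<^sup>2)"
    and f: "f \<in> borel_measurable borel" "set_integrable lborel {0..} (\<lambda>y. \<bar>f y\<bar> * y\<^sup>2)"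
      "set_integrable lborel {0..} (\<lambda>y. \<bar>f y\<bar> * y ^ 4)"
  shows "((\<lambda>t. t * (gamma_meas f - K_const t * mu_Q \<mu> t f))
    \<longlongrightarrow> (\<integral>x. (LBINT y:{0..}. f y * (y\<^sup>2 * (x\<^sup>2 + y\<^sup>2) / 2)) \<partial>\<mu>)) at_top"
proof -
  interpret prob_space \<mu>
    by fact
  define A where "A = (LBINT y:{0..}. \<bar>f y\<bar> * y\<^sup>2)"
  define B where "B = (LBINT y:{0..}. \<bar>f y\<bar> * y ^ 4)"
  note [measurable] = f(1) borel_measurable_bessel3_Q[OF f(1)]
  note \<mu>_measurable = measurable_cong_sets[OF \<mu>(2) refl]
  have "((\<lambda>t. \<integral>x. t * (gamma_meas f - K_const t * bessel3_Q t f x) \<partial>\<mu>)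
      \<longlongrightarrow> (\<integral>x. (LBINT y:{0..}. f y * (y\<^sup>2 * (x\<^sup>2 + y\<^sup>2) / 2)) \<partial>\<mu>)) at_top"
  proof (rule integral_dominated_convergence_at_top[where w="\<lambda>x. (x\<^sup>2 * A + B) / 2"])
    show "(\<lambda>x. LBINT y:{0..}. f y * (y\<^sup>2 * (x\<^sup>2 + y\<^sup>2) / 2)) \<in> borel_measurable \<mu>"
      unfolding \<mu>_measurable set_lebesgue_integral_def by measurable
    show "(\<lambda>x. t * (gamma_meas f - K_const t * bessel3_Q t f x)) \<in> borel_measurable \<mu>" for t
      unfolding \<mu>_measurable by measurable
    show "integrable \<mu> (\<lambda>x. (x\<^sup>2 * A + B) / 2)"
      using \<mu>(4) by simp
    show "AE x in \<mu>. ((\<lambda>t. t * (gamma_meas f - K_const t * bessel3_Q t f x))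
        \<longlongrightarrow> (LBINT y:{0..}. f y * (y\<^sup>2 * (x\<^sup>2 + y\<^sup>2) / 2))) at_top"
      using \<mu>(3) by eventually_elim (rule tendsto_gamma_meas_minus_K_const_mult_bessel3_Q[OF f])
    show "\<forall>\<^sub>F t in at_top. AE x in \<mu>.
        norm (t * (gamma_meas f - K_const t * bessel3_Q t f x)) \<le> (x\<^sup>2 * A + B) / 2"
      using eventually_gt_at_top[of 0]
    proof eventually_elim
      case (elim t)
      show ?case
        using \<mu>(3)
      proof eventually_elim
        case (elim x)
        have "t * \<bar>gamma_meas f - K_const t * bessel3_Q t f x\<bar> \<le> t * ((x\<^sup>2 * A + B) / (2 * t))"
          using abs_gamma_meas_minus_K_const_mult_bessel3_Q_le[OF f \<open>t > 0\<close> elim, folded A_def B_def]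
            \<open>t > 0\<close> by (intro mult_left_mono) simp_all
        then show ?case
          using \<open>t > 0\<close> by (simp add: abs_mult)
      qed
    qed
  qed
  moreover have "\<forall>\<^sub>F t in at_top. (\<integral>x. t * (gamma_meas f - K_const t * bessel3_Q t f x) \<partial>\<mu>)
      = t * (gamma_meas f - K_const t * mu_Q \<mu> t f)"
    using eventually_gt_at_top[of 0]
    by eventually_elim (simp add: gamma_meas_minus_K_const_mult_mu_Q[OF \<mu>(1-3) f(1,2)])
  ultimately show ?thesis
    by (rule Lim_transform_eventually)
qed

theorem lemma3p2:
  fixes f :: "real \<Rightarrow> real" and \<mu> :: "real measure"
  assumes f_meas: "f \<in> borel_measurable borel"
    and Cf_fin: "(\<integral>\<^sup>+x\<in>{0..}. ennreal (\<bar>f x\<bar> * x\<^sup>2) \<partial>lborel) < \<infinity>"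
    and Cf'_fin: "(\<integral>\<^sup>+x\<in>{0..}. ennreal (\<bar>f x\<bar> * x ^ 4) \<partial>lborel) < \<infinity>"
    and mu_prob: "prob_space \<mu>"
    and mu_sets: "sets \<mu> = sets borel"
    and mu_supp: "emeasure \<mu> {0<..} = 1"
    and mu_mom: "integrable \<mu> (\<lambda>x. x\<^sup>2)"
  shows "(\<forall>t>0. \<bar>gamma_meas f - K_const t * mu_Q \<mu> t f\<bar>
            \<le> ((1/2) * (LBINT x:{0..}. \<bar>f x\<bar> * x\<^sup>2) * (\<integral>x. x\<^sup>2 \<partial>\<mu>)
               + (1/2) * (LBINT x:{0..}. \<bar>f x\<bar> * x ^ 4)) / t)
       \<and> ((\<forall>x. 0 \<le> f x) \<longrightarrow>
          ((\<lambda>t. t * (gamma_meas f - K_const t * mu_Q \<mu> t f))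
             \<longlongrightarrow> (\<integral>x. (LBINT y:{0..}. f y * (y\<^sup>2 * (x\<^sup>2 + y\<^sup>2) / 2)) \<partial>\<mu>)) at_top)"
proof -
  have f_int: "set_integrable lborel {0..} (\<lambda>x. \<bar>f x\<bar> * x\<^sup>2)"
    "set_integrable lborel {0..} (\<lambda>x. \<bar>f x\<bar> * x ^ 4)"
    using Cf_fin Cf'_fin f_meas
    by (auto intro!: set_integrableI_bounded simp: set_borel_measurable_def abs_mult)
  have "AE x in \<mu>. x \<in> {0<..}"
    using mu_supp by (intro prob_space.AE_prob_1[OF mu_prob]) (simp add: measure_def)
  then have mu_pos: "AE x in \<mu>. 0 < x"
    by simp
  show ?thesis
    using abs_gamma_meas_minus_K_const_mult_mu_Q_le tendsto_gamma_meas_minus_K_const_mult_mu_Q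
      mu_prob mu_sets mu_pos mu_mom f_meas f_int
    by blast
qed

end
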